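(* For each positive integer $n$, let $\Gamma_n$ be the set of non-negative integers that can be expressed as a finite sum of squares of integers greater than or equal to $n$ (the empty sum being $0$), and let $F(\Gamma_n)$ denote the greatest integer not belonging to $\Gamma_n$. Then $F(\Gamma_n)=O(n^2)$; that is, there is a constant $C>0$ such that $F(\Gamma_n)\le C n^2$ for all positive integers $n$.
   Context: For every positive integer $n$ the set $\mathbb{N}\setminus\Gamma_n$ of non-negative integers not in $\Gamma_n$ is finite (since $\gcd(n^2,(n+1)^2)=1$), so $F(\Gamma_n)$ is well defined. *)

theory Defs
  imports "HOL-Analysis.Analysis"
begin

definition Gamma :: "nat \<Rightarrow> int set" where
  "Gamma n = {m. \<exists>xs :: int list. (\<forall>x\<in>set xs. x \<ge> int n) \<and> m = (\<Sum>x\<leftarrow>xs. x^2)}"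

text \<open>Frobenius number: greatest integer not in the set (among non-negative integers);
  by the usual convention it is -1 if every non-negative integer belongs to the set.\<close>
definition Frob :: "int set \<Rightarrow> int" where
  "Frob S = (if {m::int. m \<ge> 0 \<and> m \<notin> S} = {} then -1 else Max {m::int. m \<ge> 0 \<and> m \<notin> S})"

end

theory Submission
  imports Defs "HOL-Computational_Algebra.Primes"
begin

text \<open>By Lagrange's four-square theorem every \<open>t \<le> 4n\<^sup>2\<close> is \<open>a\<^sup>2 + b\<^sup>2 + c\<^sup>2 + d\<^sup>2\<close> with
  \<open>|a|, |b|, |c|, |d| \<le> 2n\<close>, and \<open>(3n + a)\<^sup>2 + (3n - a)\<^sup>2 = 18n\<^sup>2 + 2a\<^sup>2\<close> is a sum of two squares
  of integers \<open>\<ge> n\<close>. Hence \<open>\<Gamma>\<^sub>n\<close> contains every even number in \<open>[72n\<^sup>2, 80n\<^sup>2]\<close>, and, adding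
  \<open>n\<^sup>2\<close> repeatedly, every even number \<open>\<ge> 72n\<^sup>2\<close>; adding the odd element \<open>n\<^sup>2 + (n+1)\<^sup>2 \<le> 5n\<^sup>2\<close>
  yields every number \<open>\<ge> 77n\<^sup>2\<close>, so \<open>F(\<Gamma>\<^sub>n) < 77n\<^sup>2\<close>.\<close>

section \<open>Lagrange's four-square theorem\<close>

definition sum_of_four_squares :: "int \<Rightarrow> bool" where
  "sum_of_four_squares m \<longleftrightarrow> (\<exists>a b c d. m = a\<^sup>2 + b\<^sup>2 + c\<^sup>2 + d\<^sup>2)"

lemma euler_four_square_identity:
  fixes x1 x2 x3 x4 y1 y2 y3 y4 :: int
  shows "(x1\<^sup>2 + x2\<^sup>2 + x3\<^sup>2 + x4\<^sup>2) * (y1\<^sup>2 + y2\<^sup>2 + y3\<^sup>2 + y4\<^sup>2) =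
    (x1*y1 + x2*y2 + x3*y3 + x4*y4)\<^sup>2 + (x1*y2 - x2*y1 + x3*y4 - x4*y3)\<^sup>2 +
    (x1*y3 - x2*y4 - x3*y1 + x4*y2)\<^sup>2 + (x1*y4 + x2*y3 - x3*y2 - x4*y1)\<^sup>2"
  by (simp add: power2_eq_square algebra_simps)

lemma sum_of_four_squares_mult:
  "sum_of_four_squares a \<Longrightarrow> sum_of_four_squares b \<Longrightarrow> sum_of_four_squares (a * b)"
  unfolding sum_of_four_squares_def using euler_four_square_identity by metis

lemma sum_of_four_squares_half:
  assumes "sum_of_four_squares (2 * m)"
  shows "sum_of_four_squares m"
proof -
  have paired: "sum_of_four_squares m"
    if sum: "2 * m = a\<^sup>2 + b\<^sup>2 + c\<^sup>2 + d\<^sup>2" and "even (a - b)" "even (c - d)" for a b c d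
  proof -
    obtain u v where "a = b + 2 * u" "c = d + 2 * v"
      using \<open>even (a - b)\<close> \<open>even (c - d)\<close> by (metis add.commute diff_add_cancel evenE)
    with sum have "m = (b + u)\<^sup>2 + u\<^sup>2 + (d + v)\<^sup>2 + v\<^sup>2"
      by (simp add: power2_eq_square algebra_simps)
    then show ?thesis
      unfolding sum_of_four_squares_def by blast
  qed
  obtain a b c d where sum: "2 * m = a\<^sup>2 + b\<^sup>2 + c\<^sup>2 + d\<^sup>2"
    using assms unfolding sum_of_four_squares_def by blast
  then have "even (a\<^sup>2 + b\<^sup>2 + c\<^sup>2 + d\<^sup>2)"
    by (metis dvd_triv_left)
  then have "(even (a - b) \<and> even (c - d)) \<or> (even (a - c) \<and> even (b - d)) \<or>
      (even (a - d) \<and> even (b - c))"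
    by (auto simp: even_add)
  moreover have "2 * m = a\<^sup>2 + c\<^sup>2 + b\<^sup>2 + d\<^sup>2" "2 * m = a\<^sup>2 + d\<^sup>2 + b\<^sup>2 + c\<^sup>2"
    using sum by simp_all
  ultimately show ?thesis
    using paired sum by blast
qed

lemma centered_residue:
  fixes m x :: int
  assumes "odd m" "0 < m"
  shows "\<exists>y. m dvd x - y \<and> 2 * \<bar>y\<bar> < m"
proof -
  define r where "r = x mod m"
  have r: "0 \<le> r" "r < m" "m dvd x - r"
    using \<open>0 < m\<close> by (simp_all add: r_def mod_eq_dvd_iff)
  have "2 * r \<noteq> m"
    using \<open>odd m\<close> by auto
  show ?thesis
  proof (cases "2 * r < m")
    case True
    with r show ?thesis by auto
  next
    case False
    have "m dvd (x - r) + m"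
      using r(3) by simp
    then have "m dvd x - (r - m)"
      by (simp add: algebra_simps)
    with False \<open>2 * r \<noteq> m\<close> r show ?thesis
      by (intro exI[of _ "r - m"]) auto
  qed
qed

text \<open>The reduction step of Lagrange's descent: if \<open>x\<^sub>i \<equiv> y\<^sub>i (mod m)\<close>, every term of Euler's
  identity for \<open>(\<Sum>x\<^sub>i\<^sup>2)(\<Sum>y\<^sub>i\<^sup>2) = m\<^sup>2 p r\<close> is divisible by \<open>m\<close>.\<close>

lemma sum_of_four_squares_cancel_congruent:
  fixes x1 x2 x3 x4 y1 y2 y3 y4 m p r :: int
  assumes x: "x1\<^sup>2 + x2\<^sup>2 + x3\<^sup>2 + x4\<^sup>2 = m * p"
    and y: "y1\<^sup>2 + y2\<^sup>2 + y3\<^sup>2 + y4\<^sup>2 = m * r"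
    and "m dvd x1 - y1" "m dvd x2 - y2" "m dvd x3 - y3" "m dvd x4 - y4"
    and "m \<noteq> 0"
  shows "sum_of_four_squares (p * r)"
proof -
  have "x = y + m * ((x - y) div m)" if "m dvd x - y" for x y
    using that by simp
  then obtain k1 k2 k3 k4 where
    k: "x1 = y1 + m * k1" "x2 = y2 + m * k2" "x3 = y3 + m * k3" "x4 = y4 + m * k4"
    using assms(3-6) by blast
  define w1 where "w1 = k1*y1 + k2*y2 + k3*y3 + k4*y4"
  define w2 where "w2 = k1*y2 - k2*y1 + k3*y4 - k4*y3"
  define w3 where "w3 = k1*y3 - k2*y4 - k3*y1 + k4*y2"
  define w4 where "w4 = k1*y4 + k2*y3 - k3*y2 - k4*y1"
  have "m\<^sup>2 * (p * r) = (x1\<^sup>2 + x2\<^sup>2 + x3\<^sup>2 + x4\<^sup>2) * (y1\<^sup>2 + y2\<^sup>2 + y3\<^sup>2 + y4\<^sup>2)"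
    unfolding x y by (simp add: power2_eq_square)
  also have "\<dots> = (y1\<^sup>2 + y2\<^sup>2 + y3\<^sup>2 + y4\<^sup>2 + m * w1)\<^sup>2 + (m * w2)\<^sup>2 + (m * w3)\<^sup>2 + (m * w4)\<^sup>2"
    unfolding euler_four_square_identity k w1_def w2_def w3_def w4_def
    by (simp add: power2_eq_square algebra_simps)
  also have "\<dots> = m\<^sup>2 * ((r + w1)\<^sup>2 + w2\<^sup>2 + w3\<^sup>2 + w4\<^sup>2)"
    unfolding y by (simp add: power2_eq_square algebra_simps)
  finally show ?thesis
    using \<open>m \<noteq> 0\<close> unfolding sum_of_four_squares_def by auto
qed

lemma prime_multiple_descent_odd:
  fixes p m x1 x2 x3 x4 :: int
  assumes p: "prime p" and m: "1 < m" "m < p" "odd m"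
    and x: "m * p = x1\<^sup>2 + x2\<^sup>2 + x3\<^sup>2 + x4\<^sup>2"
  shows "\<exists>r. 0 < r \<and> r < m \<and> sum_of_four_squares (r * p)"
proof -
  obtain f where f: "\<And>x. m dvd x - f x \<and> 2 * \<bar>f x\<bar> < m"
    using centered_residue[OF \<open>odd m\<close>] m(1) by (metis zero_less_one order.strict_trans)
  define y1 y2 y3 y4 where "y1 = f x1" "y2 = f x2" "y3 = f x3" "y4 = f x4"
  then have dvd: "m dvd x1 - y1" "m dvd x2 - y2" "m dvd x3 - y3" "m dvd x4 - y4"
    and small: "2 * \<bar>y1\<bar> < m" "2 * \<bar>y2\<bar> < m" "2 * \<bar>y3\<bar> < m" "2 * \<bar>y4\<bar> < m"
    using f by simp_all
  define S where "S = y1\<^sup>2 + y2\<^sup>2 + y3\<^sup>2 + y4\<^sup>2"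
  have sq_dvd: "m dvd x\<^sup>2 - y\<^sup>2" if "m dvd x - y" for x y
    using that unfolding power2_eq_square square_diff_square_factored by (rule dvd_mult)
  have "m * p - S = (x1\<^sup>2 - y1\<^sup>2) + (x2\<^sup>2 - y2\<^sup>2) + (x3\<^sup>2 - y3\<^sup>2) + (x4\<^sup>2 - y4\<^sup>2)"
    unfolding S_def x by simp
  then have "m dvd m * p - S"
    by (simp only:) (intro dvd_add sq_dvd dvd)
  then have "m dvd S"
    using dvd_diff[OF dvd_triv_left[of m p]] by fastforce
  then obtain r where r: "S = m * r"
    by blast
  have "0 \<le> S"
    unfolding S_def by simp
  with r m(1) have "0 \<le> r"
    by (simp add: zero_le_mult_iff)
  have quarter: "4 * y\<^sup>2 < m\<^sup>2" if "2 * \<bar>y\<bar> < m" for y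
    using power_strict_mono[OF that, of 2] by (simp add: power_mult_distrib)
  have "m * r < m * m"
    using quarter[OF small(1)] quarter[OF small(2)] quarter[OF small(3)] quarter[OF small(4)] r
    unfolding S_def by (simp add: power2_eq_square)
  then have "r < m"
    using m(1) by simp
  have "r \<noteq> 0"
  proof
    assume "r = 0"
    then have "S = 0"
      using r by simp
    then have "y1\<^sup>2 = 0" "y2\<^sup>2 = 0" "y3\<^sup>2 = 0" "y4\<^sup>2 = 0"
      using S_def zero_le_power2[of y1] zero_le_power2[of y2] zero_le_power2[of y3] zero_le_power2[of y4]
      by linarith+
    then have "m\<^sup>2 dvd x1\<^sup>2 + x2\<^sup>2 + x3\<^sup>2 + x4\<^sup>2"
      using dvd by (intro dvd_add dvd_power_same) simp_all
    then have "m dvd p"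
      unfolding x[symmetric] using m(1) by (simp add: power2_eq_square)
    with p m show False
      using prime_int_not_dvd by blast
  qed
  moreover have "sum_of_four_squares (r * p)"
    using sum_of_four_squares_cancel_congruent[OF x[symmetric] r[unfolded S_def] dvd] m(1)
    by (simp add: mult.commute)
  ultimately show ?thesis
    using \<open>0 \<le> r\<close> \<open>r < m\<close> by (intro exI[of _ r]) auto
qed

text \<open>For odd \<open>m\<close> the centered residues satisfy \<open>|y\<^sub>i| < m/2\<close> strictly, which forces
  \<open>r < m\<close>; for even \<open>m\<close> one halves instead.\<close>

lemma prime_multiple_descent:
  fixes p m :: int
  assumes p: "prime p" and m: "1 < m" "m < p" and mp: "sum_of_four_squares (m * p)"
  shows "\<exists>r. 0 < r \<and> r < m \<and> sum_of_four_squares (r * p)"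
proof (cases "even m")
  case True
  then obtain h where "m = 2 * h"
    by blast
  with m mp sum_of_four_squares_half[of "h * p"] show ?thesis
    by (intro exI[of _ h]) (simp add: mult.assoc)
next
  case False
  with mp show ?thesis
    using prime_multiple_descent_odd[OF p m False] unfolding sum_of_four_squares_def by blast
qed

lemma sum_of_four_squares_prime_multiple:
  fixes p :: int
  assumes "prime p"
  shows "0 < m \<Longrightarrow> m < p \<Longrightarrow> sum_of_four_squares (m * p) \<Longrightarrow> sum_of_four_squares p"
proof (induction "nat m" arbitrary: m rule: less_induct)
  case less
  show ?case
  proof (cases "m = 1")
    case True
    with less.prems show ?thesis by simp
  next
    case False
    with less.prems obtain r where "0 < r" "r < m" "sum_of_four_squares (r * p)"
      using prime_multiple_descent[OF assms, of m] by auto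
    with less show ?thesis by auto
  qed
qed

lemma eq_of_dvd_diff_int:
  fixes p x y :: int
  assumes "0 \<le> x" "x < p" "0 \<le> y" "y < p" "p dvd x - y"
  shows "x = y"
  using assms by (metis mod_eq_dvd_iff mod_pos_pos_trivial)

lemma square_mod_prime_inj_on:
  fixes p :: int
  assumes "prime p"
  shows "inj_on (\<lambda>x. x\<^sup>2 mod p) {0..(p - 1) div 2}"
proof (rule inj_onI)
  fix x y
  assume "x \<in> {0..(p - 1) div 2}" "y \<in> {0..(p - 1) div 2}" and "x\<^sup>2 mod p = y\<^sup>2 mod p"
  then have bounds: "0 \<le> x" "0 \<le> y" "x + y < p"
    by auto
  have "p dvd (x + y) * (x - y)"
    using \<open>x\<^sup>2 mod p = y\<^sup>2 mod p\<close>
    by (simp add: mod_eq_dvd_iff power2_eq_square square_diff_square_factored)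
  then consider "p dvd (x + y) - 0" | "p dvd x - y"
    using assms by (auto simp: prime_dvd_mult_iff)
  then show "x = y"
  proof cases
    case 1
    with bounds have "x + y = 0"
      by (intro eq_of_dvd_diff_int[of _ p]) auto
    with bounds show ?thesis
      by simp
  next
    case 2
    with bounds show ?thesis
      by (intro eq_of_dvd_diff_int[of _ p]) auto
  qed
qed

text \<open>The residues \<open>x\<^sup>2\<close> and \<open>-1 - y\<^sup>2\<close> for \<open>0 \<le> x, y \<le> (p - 1)/2\<close> form two sets of
  \<open>(p + 1)/2\<close> elements of \<open>\<int>/p\<close>, so they meet.\<close>

lemma prime_dvd_two_squares_plus_one:
  fixes p :: int
  assumes p: "prime p" and "odd p"
  shows "\<exists>x y. 0 \<le> x \<and> 2 * x < p \<and> 0 \<le> y \<and> 2 * y < p \<and> p dvd x\<^sup>2 + y\<^sup>2 + 1"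
proof -
  define h where "h = (p - 1) div 2"
  have hp: "2 * h + 1 = p"
    using \<open>odd p\<close> unfolding h_def by (simp add: odd_two_times_div_two_succ)
  have "p > 0"
    using p prime_gt_0_int by blast
  define A where "A = (\<lambda>x. x\<^sup>2 mod p) ` {0..h}"
  define B where "B = (\<lambda>x. (- 1 - x) mod p) ` A"
  have inj_neg: "inj_on (\<lambda>x. (- 1 - x) mod p) {0..<p}"
  proof (rule inj_onI)
    fix x y
    assume "x \<in> {0..<p}" "y \<in> {0..<p}" "(- 1 - x) mod p = (- 1 - y) mod p"
    then show "x = y"
      by (intro eq_of_dvd_diff_int[of _ p]) (auto simp: mod_eq_dvd_iff dvd_diff_commute)
  qed
  have "A \<subseteq> {0..<p}" "B \<subseteq> {0..<p}"
    using \<open>p > 0\<close> unfolding A_def B_def by auto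
  have "card A = nat (h + 1)"
    using card_image[OF square_mod_prime_inj_on[OF p]] unfolding A_def h_def by simp
  moreover have "card B = card A"
    unfolding B_def using inj_on_subset[OF inj_neg \<open>A \<subseteq> {0..<p}\<close>] by (rule card_image)
  ultimately have "card A + card B > card {0..<p}"
    using hp \<open>p > 0\<close> by simp
  moreover have "card (A \<union> B) \<le> card {0..<p}"
    using \<open>A \<subseteq> {0..<p}\<close> \<open>B \<subseteq> {0..<p}\<close> by (intro card_mono) auto
  ultimately have "A \<inter> B \<noteq> {}"
    using card_Un_disjoint[of A B] unfolding A_def B_def by auto
  then obtain x y where xy: "x \<in> {0..h}" "y \<in> {0..h}" "x\<^sup>2 mod p = (- 1 - y\<^sup>2 mod p) mod p"
    unfolding A_def B_def by blast
  then have "p dvd x\<^sup>2 - (- 1 - y\<^sup>2)"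
    by (simp add: mod_diff_right_eq mod_eq_dvd_iff)
  then show ?thesis
    using xy(1,2) hp by (intro exI[of _ x] exI[of _ y]) (auto simp: algebra_simps)
qed

lemma sum_of_four_squares_prime:
  fixes p :: int
  assumes p: "prime p"
  shows "sum_of_four_squares p"
proof (cases "p = 2")
  case True
  then show ?thesis
    unfolding sum_of_four_squares_def by (intro exI[of _ 1] exI[of _ 0]) simp
next
  case False
  with prime_ge_2_int[OF p] have "odd p"
    using prime_odd_int[OF p] by simp
  then obtain x y where xy: "0 \<le> x" "2 * x < p" "0 \<le> y" "2 * y < p" "p dvd x\<^sup>2 + y\<^sup>2 + 1"
    using prime_dvd_two_squares_plus_one[OF p] by blast
  from xy(5) obtain m where m: "x\<^sup>2 + y\<^sup>2 + 1 = p * m"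
    by (elim dvdE)
  have "(2 * x)\<^sup>2 < p\<^sup>2" "(2 * y)\<^sup>2 < p\<^sup>2"
    using xy by (intro power_strict_mono; simp)+
  moreover have "2\<^sup>2 \<le> p\<^sup>2"
    using prime_ge_2_int[OF p] by (intro power_mono) simp_all
  ultimately have "p * m < p * p"
    unfolding m[symmetric] power2_eq_square by simp
  moreover have "0 < p * m"
    unfolding m[symmetric] by (simp add: add_nonneg_pos)
  moreover have "p > 0"
    using prime_gt_0_int[OF p] .
  ultimately have "0 < m" "m < p"
    by (simp_all add: zero_less_mult_iff)
  moreover have "sum_of_four_squares (m * p)"
    unfolding sum_of_four_squares_def using m
    by (intro exI[of _ x] exI[of _ y] exI[of _ 1] exI[of _ 0]) (simp add: mult.commute)
  ultimately show ?thesis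
    using sum_of_four_squares_prime_multiple[OF p] by blast
qed

theorem lagrange_four_squares:
  fixes n :: int
  assumes "0 \<le> n"
  shows "sum_of_four_squares n"
  using assms
proof (induction n rule: prime_divisors_induct)
  case zero
  then show ?case
    unfolding sum_of_four_squares_def by (intro exI[of _ 0]) simp
next
  case (unit x)
  then have "x = 1"
    by auto
  then show ?case
    unfolding sum_of_four_squares_def by (intro exI[of _ 1] exI[of _ 0]) simp
next
  case (factor p x)
  then have "0 \<le> x"
    using prime_gt_0_int[of p] by (simp add: zero_le_mult_iff)
  with factor show ?case
    using sum_of_four_squares_mult sum_of_four_squares_prime by blast
qed

section \<open>Sums of squares of integers \<open>\<ge> n\<close>\<close>

lemma Gamma_zero: "0 \<in> Gamma n"
  unfolding Gamma_def by (intro CollectI exI[of _ "[]"]) simp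

lemma Gamma_square: "int n \<le> x \<Longrightarrow> x\<^sup>2 \<in> Gamma n"
  unfolding Gamma_def by (intro CollectI exI[of _ "[x]"]) simp

lemma Gamma_add:
  assumes "a \<in> Gamma n" "b \<in> Gamma n"
  shows "a + b \<in> Gamma n"
proof -
  obtain xs ys where "\<forall>x\<in>set xs. x \<ge> int n" "a = (\<Sum>x\<leftarrow>xs. x\<^sup>2)"
    "\<forall>x\<in>set ys. x \<ge> int n" "b = (\<Sum>x\<leftarrow>ys. x\<^sup>2)"
    using assms unfolding Gamma_def by blast
  then show ?thesis
    unfolding Gamma_def by (intro CollectI exI[of _ "xs @ ys"]) auto
qed

lemma Gamma_mult_square:
  assumes "0 \<le> k"
  shows "k * (int n)\<^sup>2 \<in> Gamma n"
proof -
  have "int j * (int n)\<^sup>2 \<in> Gamma n" for j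
    by (induction j) (auto simp: Gamma_zero distrib_right intro: Gamma_add Gamma_square)
  from this[of "nat k"] assms show ?thesis
    by simp
qed

lemma Gamma_symmetric_pair:
  assumes "\<bar>a\<bar> \<le> 2 * int n"
  shows "18 * (int n)\<^sup>2 + 2 * a\<^sup>2 \<in> Gamma n"
proof -
  have "(3 * int n + a)\<^sup>2 + (3 * int n - a)\<^sup>2 \<in> Gamma n"
    using assms by (intro Gamma_add Gamma_square) linarith+
  moreover have "(3 * int n + a)\<^sup>2 + (3 * int n - a)\<^sup>2 = 18 * (int n)\<^sup>2 + 2 * a\<^sup>2"
    by (simp add: power2_eq_square algebra_simps)
  ultimately show ?thesis
    by simp
qed

lemma Gamma_even_window:
  assumes "0 \<le> t" "t \<le> 4 * (int n)\<^sup>2"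
  shows "72 * (int n)\<^sup>2 + 2 * t \<in> Gamma n"
proof -
  obtain a b c d where t: "t = a\<^sup>2 + b\<^sup>2 + c\<^sup>2 + d\<^sup>2"
    using lagrange_four_squares[OF assms(1)] unfolding sum_of_four_squares_def by blast
  have bounded: "\<bar>z\<bar> \<le> 2 * int n" if "z\<^sup>2 \<le> t" for z
  proof -
    have "z\<^sup>2 \<le> (2 * int n)\<^sup>2"
      using that assms(2) by (simp add: power_mult_distrib)
    then show ?thesis
      using abs_le_square_iff[of z "2 * int n"] by simp
  qed
  have "\<bar>a\<bar> \<le> 2 * int n" "\<bar>b\<bar> \<le> 2 * int n" "\<bar>c\<bar> \<le> 2 * int n" "\<bar>d\<bar> \<le> 2 * int n"
    using t by (intro bounded; simp)+
  then have "(18 * (int n)\<^sup>2 + 2 * a\<^sup>2) + (18 * (int n)\<^sup>2 + 2 * b\<^sup>2) +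
      (18 * (int n)\<^sup>2 + 2 * c\<^sup>2) + (18 * (int n)\<^sup>2 + 2 * d\<^sup>2) \<in> Gamma n"
    by (intro Gamma_add Gamma_symmetric_pair)
  moreover have "(18 * (int n)\<^sup>2 + 2 * a\<^sup>2) + (18 * (int n)\<^sup>2 + 2 * b\<^sup>2) +
      (18 * (int n)\<^sup>2 + 2 * c\<^sup>2) + (18 * (int n)\<^sup>2 + 2 * d\<^sup>2) = 72 * (int n)\<^sup>2 + 2 * t"
    using t by simp
  ultimately show ?thesis
    by simp
qed

lemma Gamma_even_large:
  assumes "0 < n" "even m" "72 * (int n)\<^sup>2 \<le> m"
  shows "m \<in> Gamma n"
proof -
  define N where "N = (int n)\<^sup>2"
  obtain u where "m = 2 * u"
    using \<open>even m\<close> by blast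
  define t where "t = u - 36 * N"
  have t: "m = 72 * N + 2 * t"
    using \<open>m = 2 * u\<close> unfolding t_def by simp
  have "0 < N"
    using assms(1) unfolding N_def by simp
  have "0 \<le> t"
    using assms(3) t unfolding N_def by simp
  have "0 \<le> t mod N" "t mod N \<le> 4 * N"
    using \<open>0 < N\<close> pos_mod_sign[of N t] pos_mod_bound[of N t] by linarith+
  then have window: "72 * N + 2 * (t mod N) \<in> Gamma n"
    using Gamma_even_window[of "t mod N" n] unfolding N_def by blast
  have "0 \<le> 2 * (t div N)"
    using \<open>0 < N\<close> \<open>0 \<le> t\<close> by (simp add: pos_imp_zdiv_nonneg_iff)
  then have multiple: "2 * (t div N) * N \<in> Gamma n"
    using Gamma_mult_square unfolding N_def by blast
  have "m = (72 * N + 2 * (t mod N)) + 2 * (t div N) * N"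
    using t div_mult_mod_eq[of t N] unfolding mult.assoc by linarith
  then show ?thesis
    using Gamma_add[OF window multiple] by simp
qed

lemma Gamma_large:
  assumes "0 < n" "77 * (int n)\<^sup>2 \<le> m"
  shows "m \<in> Gamma n"
proof (cases "even m")
  case True
  with assms show ?thesis
    using zero_le_power2[of "int n"] by (intro Gamma_even_large) linarith+
next
  case False
  define w where "w = (int n)\<^sup>2 + (int n + 1)\<^sup>2"
  have "w \<in> Gamma n"
    unfolding w_def by (intro Gamma_add Gamma_square) simp_all
  have "(int n + 1)\<^sup>2 \<le> (2 * int n)\<^sup>2"
    using assms(1) by (intro power_mono) auto
  then have "w = 2 * ((int n)\<^sup>2 + int n) + 1" "w \<le> 5 * (int n)\<^sup>2"
    unfolding w_def by (simp_all add: power2_eq_square algebra_simps)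
  then have "m - w \<in> Gamma n"
    using False assms by (intro Gamma_even_large) auto
  with \<open>w \<in> Gamma n\<close> show ?thesis
    using Gamma_add by fastforce
qed

lemma Frob_less:
  assumes "0 \<le> B" "\<And>m. B \<le> m \<Longrightarrow> m \<in> S"
  shows "Frob S < B"
proof -
  let ?G = "{m::int. 0 \<le> m \<and> m \<notin> S}"
  have sub: "?G \<subseteq> {0..<B}"
    using assms(2) by (auto simp: not_le[symmetric])
  show ?thesis
  proof (cases "?G = {}")
    case True
    then have "Frob S = -1"
      unfolding Frob_def by (rule if_P)
    with assms(1) show ?thesis
      by simp
  next
    case False
    have "finite ?G"
      using sub by (rule finite_subset) simp
    with False sub have "Max ?G < B"
      using Max_in[of ?G] by auto
    moreover have "Frob S = Max ?G"
      unfolding Frob_def using False by (rule if_not_P)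
    ultimately show ?thesis
      by simp
  qed
qed

theorem theorem1:
  shows "\<exists>C::real. C > 0 \<and> (\<forall>n::nat. n \<ge> 1 \<longrightarrow> real_of_int (Frob (Gamma n)) \<le> C * (real n)^2)"
proof (intro exI[of _ 77] conjI allI impI)
  fix n :: nat
  assume "n \<ge> 1"
  then have "Frob (Gamma n) < 77 * (int n)\<^sup>2"
    using Gamma_large by (intro Frob_less) auto
  then have "real_of_int (Frob (Gamma n)) < real_of_int (77 * (int n)\<^sup>2)"
    by (simp only: of_int_less_iff)
  then show "real_of_int (Frob (Gamma n)) \<le> 77 * (real n)^2"
    by simp
qed simp

end
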